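(* Let $E$ be a Banach lattice with an order continuous norm, let $A$ be an ideal in $E$, and let $\mathfrak{B}$ be the Boolean subalgebra of $\mathfrak{B}(E)$ generated by the order projections $\pi_x$, $x\in A$, where $\pi_x(z)=\sup\{z\wedge n|x|:n\in\mathbb{N}\}$. Suppose $T$ is $\mathfrak{B}$-Volterra, $0\le x_3\le x_2\le x_1$ in $A$, and $\{\pi_{x_1},\sigma,\rho\}$ is an antichain in $\mathfrak{B}$. Then $(\pi_{x_1}-\pi_{x_2})T\sigma x\perp(\pi_{x_2}-\pi_{x_3})T(\rho^*\sigma x+w)$ for every $x\in E$ and $w\in\pi_{x_1}^*(E)$. In particular, $(\pi_{x_1}-\pi_{x_2})T\sigma x\perp\pi_{x_2}T\rho^*\sigma x$ for every $x\in E$.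
   Context: $\mathfrak{B}(E)$ is the Boolean algebra of all order projections on $E$ ($\pi\le\rho$ iff $\pi\rho=\pi$, $\pi\wedge\rho=\pi\rho$, $\pi^*=I_E-\pi$, zero $\mathbf 0$, unit $\mathbf 1=I_E$). A positive operator $T$ is $\mathfrak{B}$-Volterra if for all $\pi\in\mathfrak{B}$ and $x,y\in E$, $\pi x=\pi y$ implies $\pi Tx=\pi Ty$. For $x\in E$, $\pi_x$ is the order projection onto the band generated by $x$, given on $z\in E^+$ by $\pi_x(z)=\sup\{z\wedge n|x|:n\in\mathbb{N}\}$. A nonempty subset of $\mathfrak{B}$ is an antichain if any two distinct elements have meet $\mathbf 0$. $u\perp v$ means $|u|\wedge|v|=0$. *)

theory Defs
  imports Complex_Main
begin

definition lmod :: "'a::{lattice,uminus} \<Rightarrow> 'a" where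
  "lmod x = sup x (- x)"

definition ppart :: "'a::{lattice,zero} \<Rightarrow> 'a" where
  "ppart x = sup x 0"

definition npart :: "'a::{lattice,zero,uminus} \<Rightarrow> 'a" where
  "npart x = sup (- x) 0"

class banach_lattice = banach + ordered_real_vector + lattice +
  assumes lattice_norm: "sup x (- x) \<le> sup y (- y) \<Longrightarrow> norm x \<le> norm y"

definition is_lub :: "'a::order set \<Rightarrow> 'a \<Rightarrow> bool" where
  "is_lub S s \<longleftrightarrow> (\<forall>y\<in>S. y \<le> s) \<and> (\<forall>u. (\<forall>y\<in>S. y \<le> u) \<longrightarrow> s \<le> u)"

definition is_glb :: "'a::order set \<Rightarrow> 'a \<Rightarrow> bool" where
  "is_glb S s \<longleftrightarrow> (\<forall>y\<in>S. s \<le> y) \<and> (\<forall>u. (\<forall>y\<in>S. u \<le> y) \<longrightarrow> u \<le> s)"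

definition lsup :: "'a::order set \<Rightarrow> 'a" where
  "lsup S = (THE s. is_lub S s)"

text \<open>Order continuous norm: whenever a (nonempty) downward directed set
  decreases to 0 (i.e. x_alpha decreasing to 0), the norms tend to 0.\<close>
class oc_banach_lattice = banach_lattice +
  assumes order_continuous_norm:
    "\<lbrakk> D \<noteq> {}; \<forall>a\<in>D. \<forall>b\<in>D. \<exists>c\<in>D. c \<le> a \<and> c \<le> b; \<forall>y\<in>D. 0 \<le> y; \<forall>u. (\<forall>y\<in>D. u \<le> y) \<longrightarrow> u \<le> 0; e > 0 \<rbrakk>
       \<Longrightarrow> \<exists>d\<in>D. norm d < e"

definition lattice_ideal :: "'a::banach_lattice set \<Rightarrow> bool" where
  "lattice_ideal A \<longleftrightarrow> 0 \<in> A \<and> (\<forall>x\<in>A. \<forall>y\<in>A. x + y \<in> A) \<and>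
     (\<forall>c. \<forall>x\<in>A. c *\<^sub>R x \<in> A) \<and> (\<forall>x\<in>A. \<forall>y. lmod y \<le> lmod x \<longrightarrow> y \<in> A)"

definition positive_op :: "('a::banach_lattice \<Rightarrow> 'a) \<Rightarrow> bool" where
  "positive_op T \<longleftrightarrow> linear T \<and> (\<forall>x. 0 \<le> x \<longrightarrow> 0 \<le> T x)"

definition order_projection :: "('a::banach_lattice \<Rightarrow> 'a) \<Rightarrow> bool" where
  "order_projection P \<longleftrightarrow> linear P \<and> P \<circ> P = P \<and> (\<forall>x. 0 \<le> x \<longrightarrow> 0 \<le> P x \<and> P x \<le> x)"

definition pcompl :: "('a::banach_lattice \<Rightarrow> 'a) \<Rightarrow> 'a \<Rightarrow> 'a" where
  "pcompl P = (\<lambda>z. z - P z)"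

definition pzero :: "'a::banach_lattice \<Rightarrow> 'a" where
  "pzero = (\<lambda>z. 0)"

text \<open>The band projection pi_x: on positive z it is sup{z \<and> n|x|}; extended
  linearly via z = ppart z - npart z.\<close>
definition bproj :: "'a::banach_lattice \<Rightarrow> 'a \<Rightarrow> 'a" where
  "bproj x z = lsup {inf (ppart z) (real n *\<^sub>R lmod x) | n. True}
             - lsup {inf (npart z) (real n *\<^sub>R lmod x) | n. True}"

inductive_set gen_balg :: "('a::banach_lattice \<Rightarrow> 'a) set \<Rightarrow> ('a \<Rightarrow> 'a) set"
  for G :: "('a \<Rightarrow> 'a) set" where
  gen: "P \<in> G \<Longrightarrow> P \<in> gen_balg G"
| zero: "pzero \<in> gen_balg G"
| one: "id \<in> gen_balg G"
| meet: "P \<in> gen_balg G \<Longrightarrow> Q \<in> gen_balg G \<Longrightarrow> P \<circ> Q \<in> gen_balg G"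
| compl: "P \<in> gen_balg G \<Longrightarrow> pcompl P \<in> gen_balg G"

definition volterra :: "('a::banach_lattice \<Rightarrow> 'a) set \<Rightarrow> ('a \<Rightarrow> 'a) \<Rightarrow> bool" where
  "volterra B T \<longleftrightarrow> positive_op T \<and>
     (\<forall>P\<in>B. \<forall>x y. P x = P y \<longrightarrow> P (T x) = P (T y))"

definition antichain :: "('a::banach_lattice \<Rightarrow> 'a) set \<Rightarrow> ('a \<Rightarrow> 'a) set \<Rightarrow> bool" where
  "antichain B S \<longleftrightarrow> S \<noteq> {} \<and> S \<subseteq> B \<and> (\<forall>P\<in>S. \<forall>Q\<in>S. P \<noteq> Q \<longrightarrow> P \<circ> Q = pzero)"

definition disj :: "'a::banach_lattice \<Rightarrow> 'a \<Rightarrow> bool" (infix "\<bottom>\<^sub>L" 50) where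
  "u \<bottom>\<^sub>L v \<longleftrightarrow> inf (lmod u) (lmod v) = 0"

end

theory Submission
  imports Defs "HOL-Library.Lattice_Algebras"
begin

text \<open>For \<open>0 \<le> x' \<le> x\<close> the band projections satisfy \<open>\<pi>\<^sub>x\<^sub>' \<le> \<pi>\<^sub>x\<close>, so
  \<open>(\<pi>\<^sub>x\<^sub>1 - \<pi>\<^sub>x\<^sub>2) u\<close> lies in the disjoint complement of \<open>x\<^sub>2\<close> while
  \<open>(\<pi>\<^sub>x\<^sub>2 - \<pi>\<^sub>x\<^sub>3) v\<close> lies in the band generated by \<open>x\<^sub>2\<close>. Hence the two are disjoint for
  arbitrary \<open>u\<close> and \<open>v\<close>, whatever \<open>T\<close>, \<open>\<sigma>\<close> and \<open>\<rho>\<close> are, and taking \<open>x\<^sub>3 = 0\<close> gives the second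
  claim. The only analysis involved is the existence of the suprema defining \<open>\<pi>\<^sub>x\<close>: by order
  continuity a bounded increasing sequence is norm-Cauchy, and its norm limit is its supremum.\<close>

subclass (in banach_lattice) lattice_ab_group_add ..

lemma lmod_eq_self: "0 \<le> (x::'a::lattice_ab_group_add) \<Longrightarrow> lmod x = x"
  unfolding lmod_def by (simp add: sup_absorb1 order_trans[of "-x" 0 x])

lemma lmod_nonneg: "0 \<le> lmod (x::'a::lattice_ab_group_add)"
proof -
  have "x + - x \<le> lmod x + lmod x" unfolding lmod_def by (intro add_mono) auto
  then show ?thesis by simp
qed

lemma ppart_nonneg: "0 \<le> ppart (x::'a::lattice_ab_group_add)"
  unfolding ppart_def by simp

lemma npart_nonneg: "0 \<le> npart (x::'a::lattice_ab_group_add)"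
  unfolding npart_def by simp

lemma norm_lmod: "norm (lmod (x::'a::banach_lattice)) = norm x"
  using lattice_norm[of "lmod x" x] lattice_norm[of x "lmod x"] lmod_eq_self[OF lmod_nonneg, of x]
  unfolding lmod_def by fastforce

lemma norm_mono_nonneg: "0 \<le> (a::'a::banach_lattice) \<Longrightarrow> a \<le> b \<Longrightarrow> norm a \<le> norm b"
  using lattice_norm[of a b] lmod_eq_self[of a] lmod_eq_self[of b] unfolding lmod_def by force

lemma nonneg_eq_0_if_multiples_bounded:
  fixes w c :: "'a::banach_lattice"
  assumes "0 \<le> w" "\<And>k::nat. real k *\<^sub>R w \<le> c"
  shows "w = 0"
proof (rule ccontr)
  assume "w \<noteq> 0"
  then obtain k::nat where k: "norm c < real k * norm w"
    using ex_less_of_nat_mult[of "norm w"] by auto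
  have "0 \<le> real k *\<^sub>R w" using assms(1) by (simp add: scaleR_nonneg_nonneg)
  then have "norm (real k *\<^sub>R w) \<le> norm c" using norm_mono_nonneg assms(2) by blast
  then show False using k by simp
qed

lemma LIMSEQ_nonneg:
  fixes f :: "nat \<Rightarrow> 'a::banach_lattice"
  assumes lim: "f \<longlonglongrightarrow> L" and pos: "\<And>m. m \<ge> N \<Longrightarrow> 0 \<le> f m"
  shows "0 \<le> L"
proof -
  define n where "n = sup (- L) 0"
  have n0: "0 \<le> n" unfolding n_def by simp
  have bound: "norm n \<le> norm (f m - L)" if "m \<ge> N" for m
  proof -
    have "- L \<le> f m - L" using pos[OF that] by simp
    then have "n \<le> sup (f m - L) 0" unfolding n_def using sup_mono by blast
    also have "\<dots> \<le> lmod (f m - L)"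
      using lmod_nonneg[of "f m - L"] unfolding lmod_def by simp
    finally show ?thesis using norm_mono_nonneg[OF n0] norm_lmod by metis
  qed
  have "n = 0"
  proof (rule ccontr)
    assume "n \<noteq> 0"
    with lim obtain M where M: "\<And>m. m \<ge> M \<Longrightarrow> norm (f m - L) < norm n"
      unfolding LIMSEQ_iff by (meson zero_less_norm_iff)
    show False using M[of "max M N"] bound[of "max M N"] by simp
  qed
  then show ?thesis unfolding n_def by (metis neg_le_0_iff_le sup.cobounded1)
qed

lemma incseq_LIMSEQ_is_lub:
  fixes u :: "nat \<Rightarrow> 'a::banach_lattice"
  assumes "incseq u" and L: "u \<longlonglongrightarrow> L"
  shows "is_lub (range u) L"
  unfolding is_lub_def
proof (intro conjI allI impI ballI)
  fix y assume "y \<in> range u"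
  then obtain n where y: "y = u n" by auto
  have "(\<lambda>m. u m - u n) \<longlonglongrightarrow> L - u n" using L by (intro tendsto_intros)
  then have "0 \<le> L - u n"
    by (rule LIMSEQ_nonneg[where N=n]) (use \<open>incseq u\<close> in \<open>simp add: incseqD\<close>)
  then show "y \<le> L" using y by simp
next
  fix v assume v: "\<forall>y\<in>range u. y \<le> v"
  have "(\<lambda>m. v - u m) \<longlonglongrightarrow> v - L" using L by (intro tendsto_intros)
  then have "0 \<le> v - L" by (rule LIMSEQ_nonneg[where N=0]) (use v in simp)
  then show "L \<le> v" by simp
qed

text \<open>The Archimedean property shows that the gaps \<open>v - u n\<close> between upper bounds \<open>v\<close> and
  terms \<open>u n\<close> decrease to \<open>0\<close>: a positive lower bound \<open>w\<close> could be subtracted from every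
  upper bound arbitrarily often.\<close>

lemma le_0_if_below_upper_gaps:
  fixes u :: "nat \<Rightarrow> 'a::banach_lattice"
  assumes bounded: "\<And>n. u n \<le> b"
    and below: "\<And>v n. (\<forall>m. u m \<le> v) \<Longrightarrow> w \<le> v - u n"
  shows "w \<le> 0"
proof -
  define w' where "w' = sup w 0"
  have w': "w' \<le> v - u n" if "\<forall>m. u m \<le> v" for v n
    unfolding w'_def using below[OF that] that by simp
  have "\<forall>m. u m \<le> v - real k *\<^sub>R w'" if "\<forall>m. u m \<le> v" for k v
    using that
  proof (induction k arbitrary: v)
    case (Suc k)
    have "w' \<le> (v - real k *\<^sub>R w') - u m" for m using w' Suc by blast
    then show ?case by (simp add: algebra_simps)
  qed simp
  then have "real k *\<^sub>R w' \<le> b - u 0" for k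
    using bounded by (metis le_diff_eq add.commute)
  then have "w' = 0" by (intro nonneg_eq_0_if_multiples_bounded) (simp_all add: w'_def)
  then show ?thesis unfolding w'_def by (metis sup.cobounded1)
qed

lemma bounded_incseq_upper_gap_small:
  fixes u :: "nat \<Rightarrow> 'a::oc_banach_lattice"
  assumes "incseq u" and bounded: "\<And>n. u n \<le> b" and "e > 0"
  shows "\<exists>v n. (\<forall>m. u m \<le> v) \<and> norm (v - u n) < e"
proof -
  define D where "D = {v - u n | v n. \<forall>m. u m \<le> v}"
  have "D \<noteq> {}" unfolding D_def using bounded by blast
  moreover have "\<exists>c\<in>D. c \<le> a \<and> c \<le> a'" if "a \<in> D" "a' \<in> D" for a a'
  proof -
    from that obtain v n v' n' where a: "a = v - u n" "\<forall>m. u m \<le> v"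
      and a': "a' = v' - u n'" "\<forall>m. u m \<le> v'"
      unfolding D_def by blast
    let ?c = "inf v v' - u (max n n')"
    have "?c \<in> D" unfolding D_def using a a' by auto
    moreover have "?c \<le> a" "?c \<le> a'"
      using a a' incseqD[OF \<open>incseq u\<close>, of n "max n n'"] incseqD[OF \<open>incseq u\<close>, of n' "max n n'"]
      by (auto intro: diff_mono le_infI1 le_infI2)
    ultimately show ?thesis by blast
  qed
  moreover have "\<forall>y\<in>D. 0 \<le> y" unfolding D_def by auto
  moreover have "w \<le> 0" if "\<forall>y\<in>D. w \<le> y" for w
    using le_0_if_below_upper_gaps[where u=u and b=b and w=w, OF bounded] that unfolding D_def by blast
  ultimately obtain d where "d \<in> D" "norm d < e"
    using order_continuous_norm[of D e] \<open>e > 0\<close> by blast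
  then show ?thesis unfolding D_def by blast
qed

lemma bounded_incseq_Cauchy:
  fixes u :: "nat \<Rightarrow> 'a::oc_banach_lattice"
  assumes "incseq u" and "\<And>n. u n \<le> b"
  shows "Cauchy u"
  unfolding Cauchy_def
proof (intro allI impI)
  fix e :: real assume "e > 0"
  then obtain v n where v: "\<forall>m. u m \<le> v" and vn: "norm (v - u n) < e/2"
    using bounded_incseq_upper_gap_small[OF assms, of "e/2"] by auto
  have close: "norm (u m - u n) < e/2" if "m \<ge> n" for m
  proof -
    have "0 \<le> u m - u n" using incseqD[OF \<open>incseq u\<close> that] by simp
    moreover have "u m - u n \<le> v - u n" using v by (simp add: diff_right_mono)
    ultimately show ?thesis using norm_mono_nonneg vn by (meson order.strict_trans1)
  qed
  show "\<exists>M. \<forall>m\<ge>M. \<forall>m'\<ge>M. dist (u m) (u m') < e"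
  proof (intro exI allI impI)
    fix m m' assume "n \<le> m" "n \<le> m'"
    have "norm (u m - u m') \<le> norm (u m - u n) + norm (u m' - u n)"
      using norm_triangle_ineq4[of "u m - u n" "u m' - u n"] by simp
    then show "dist (u m) (u m') < e"
      using close[OF \<open>n \<le> m\<close>] close[OF \<open>n \<le> m'\<close>] by (simp add: dist_norm)
  qed
qed

lemma lsup_eq: "is_lub S s \<Longrightarrow> lsup S = s"
  unfolding lsup_def by (rule the_equality) (auto simp: is_lub_def intro: order.antisym)

lemma bounded_incseq_has_lub:
  fixes u :: "nat \<Rightarrow> 'a::oc_banach_lattice"
  assumes "incseq u" and "\<And>n. u n \<le> b"
  shows "is_lub (range u) (lsup (range u))"
proof -
  obtain L where "u \<longlonglongrightarrow> L"
    using bounded_incseq_Cauchy[OF assms] Cauchy_convergent_iff convergent_def by blast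
  then have "is_lub (range u) L" by (rule incseq_LIMSEQ_is_lub[OF \<open>incseq u\<close>])
  then show ?thesis using lsup_eq by metis
qed

lemma inf_add_le_add_inf:
  fixes p q x :: "'a::lattice_ab_group_add"
  assumes "0 \<le> p" "0 \<le> q" "0 \<le> x"
  shows "inf (p + q) x \<le> inf p x + inf q x"
proof -
  define r where "r = inf (p + q) x"
  have "r - p \<le> q" unfolding r_def by (simp add: le_infI1 algebra_simps)
  moreover have "r - p \<le> x" unfolding r_def using assms(1)
    by (metis diff_le_eq inf.cobounded2 le_add_same_cancel1 order_trans add.commute)
  ultimately have "r \<le> p + inf q x" by (metis add.commute diff_le_eq le_inf_iff)
  moreover have "r \<le> x + inf q x" unfolding r_def using assms by (simp add: le_infI2)
  ultimately have "r \<le> inf (p + inf q x) (x + inf q x)" by simp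
  also have "\<dots> = inf p x + inf q x" by (simp add: add_inf_distrib_right)
  finally show ?thesis unfolding r_def .
qed

lemma inf_add_eq_0:
  fixes p q x :: "'a::lattice_ab_group_add"
  assumes "0 \<le> p" "0 \<le> q" "0 \<le> x" "inf p x = 0" "inf q x = 0"
  shows "inf (p + q) x = 0"
  using inf_add_le_add_inf[OF assms(1-3)] assms by (simp add: order.antisym)

lemma inf_scaleR_nat_eq_0:
  fixes d x :: "'a::banach_lattice"
  assumes "0 \<le> d" "0 \<le> x" "inf d x = 0"
  shows "inf d (real n *\<^sub>R x) = 0"
proof (induction n)
  case (Suc n)
  have "inf (real n *\<^sub>R x + x) d = 0"
    using inf_add_eq_0[of "real n *\<^sub>R x" x d] Suc assms
    by (simp add: inf_commute scaleR_nonneg_nonneg)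
  then show ?case by (simp add: inf_commute algebra_simps)
qed (use assms in \<open>simp add: inf_absorb2\<close>)

lemma lmod_diff_le_add:
  fixes p q :: "'a::lattice_ab_group_add"
  assumes "0 \<le> p" "0 \<le> q"
  shows "lmod (p - q) \<le> p + q"
  unfolding lmod_def using assms
  by (intro sup_least) (simp_all add: algebra_simps add_increasing add_increasing2)

lemma disjI_lmod_le:
  fixes a b p q :: "'a::banach_lattice"
  assumes "lmod a \<le> p" "lmod b \<le> q" "inf p q = 0"
  shows "a \<bottom>\<^sub>L b"
proof -
  have "inf (lmod a) (lmod b) \<le> 0" using assms inf_mono by metis
  then show ?thesis unfolding disj_def using lmod_nonneg[of a] lmod_nonneg[of b]
    by (simp add: order.antisym)
qed

text \<open>For \<open>0 \<le> x\<close> and \<open>0 \<le> z\<close> this is \<open>\<pi>\<^sub>x z\<close>, the component of \<open>z\<close> in the band generated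
  by \<open>x\<close>.\<close>

definition band_comp :: "'a::banach_lattice \<Rightarrow> 'a \<Rightarrow> 'a" where
  "band_comp x z = lsup {inf z (real n *\<^sub>R x) | n. True}"

lemma bproj_eq_band_comp: "bproj x z = band_comp (lmod x) (ppart z) - band_comp (lmod x) (npart z)"
  unfolding bproj_def band_comp_def ..

lemma band_comp_is_lub:
  fixes x z :: "'a::oc_banach_lattice"
  assumes "0 \<le> x" "0 \<le> z"
  shows "is_lub {inf z (real n *\<^sub>R x) | n. True} (band_comp x z)"
proof -
  have range: "{inf z (real n *\<^sub>R x) | n. True} = range (\<lambda>n. inf z (real n *\<^sub>R x))" by auto
  have "incseq (\<lambda>n. inf z (real n *\<^sub>R x))"
    using assms(1) by (intro incseq_SucI inf_mono order.refl scaleR_right_mono) auto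
  then show ?thesis
    unfolding band_comp_def range by (rule bounded_incseq_has_lub[where b=z]) simp
qed

context
  fixes x z :: "'a::oc_banach_lattice"
  assumes x0: "0 \<le> x" and z0: "0 \<le> z"
begin

lemma band_comp_ge: "inf z (real n *\<^sub>R x) \<le> band_comp x z"
  using band_comp_is_lub[OF x0 z0] unfolding is_lub_def by blast

lemma band_comp_least: "(\<And>n. inf z (real n *\<^sub>R x) \<le> v) \<Longrightarrow> band_comp x z \<le> v"
  using band_comp_is_lub[OF x0 z0] unfolding is_lub_def by blast

lemma band_comp_le: "band_comp x z \<le> z"
  by (rule band_comp_least) simp

lemma band_comp_nonneg: "0 \<le> band_comp x z"
  using band_comp_ge[of 0] z0 by (simp add: inf_absorb2)

text \<open>If \<open>w = inf (z - \<pi>\<^sub>x z) x\<close>, then \<open>w\<close> plus the \<open>n\<close>-th approximant of \<open>\<pi>\<^sub>x z\<close> is below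
  the \<open>(n+1)\<close>-st one, so \<open>\<pi>\<^sub>x z + w \<le> \<pi>\<^sub>x z\<close>.\<close>

lemma band_comp_complement_disjoint: "inf (z - band_comp x z) x = 0"
proof -
  define w where "w = inf (z - band_comp x z) x"
  have w0: "0 \<le> w" unfolding w_def using band_comp_le x0 by simp
  have "inf z (real n *\<^sub>R x) \<le> band_comp x z - w" for n
  proof -
    have "w + inf z (real n *\<^sub>R x) \<le> (z - band_comp x z) + band_comp x z"
      by (intro add_mono) (simp_all add: w_def band_comp_ge)
    moreover have "w + inf z (real n *\<^sub>R x) \<le> x + real n *\<^sub>R x"
      by (intro add_mono) (simp_all add: w_def)
    ultimately have "w + inf z (real n *\<^sub>R x) \<le> inf z (real (Suc n) *\<^sub>R x)"
      by (simp add: algebra_simps)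
    also have "\<dots> \<le> band_comp x z" by (rule band_comp_ge)
    finally show ?thesis by (simp add: algebra_simps)
  qed
  then have "band_comp x z \<le> band_comp x z - w" by (rule band_comp_least)
  then have "w \<le> 0" by simp
  then show ?thesis using w0 unfolding w_def by (rule order.antisym)
qed

end

lemma band_comp_mono:
  fixes x x' z :: "'a::oc_banach_lattice"
  assumes "0 \<le> x" "x \<le> x'" "0 \<le> z"
  shows "band_comp x z \<le> band_comp x' z"
proof (rule band_comp_least[OF assms(1,3)])
  fix n
  have "inf z (real n *\<^sub>R x) \<le> inf z (real n *\<^sub>R x')"
    using assms by (intro inf_mono order.refl scaleR_left_mono) auto
  also have "\<dots> \<le> band_comp x' z" using assms by (intro band_comp_ge) auto
  finally show "inf z (real n *\<^sub>R x) \<le> band_comp x' z" .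
qed

lemma band_comp_0:
  fixes z :: "'a::oc_banach_lattice"
  assumes "0 \<le> z"
  shows "band_comp 0 z = 0"
proof (rule order.antisym)
  show "band_comp 0 z \<le> 0" by (rule band_comp_least[OF order.refl assms]) simp
  show "0 \<le> band_comp 0 z" by (rule band_comp_nonneg[OF order.refl assms])
qed

lemma bproj_0: "bproj 0 (v::'a::oc_banach_lattice) = 0"
  unfolding bproj_eq_band_comp lmod_eq_self[OF order.refl]
  by (simp add: band_comp_0 ppart_def npart_def)

text \<open>\<open>d\<close> is disjoint from every approximant of \<open>\<pi>\<^sub>x y\<close>, so \<open>\<pi>\<^sub>x y\<close> dominates their
  sums with \<open>inf d (\<pi>\<^sub>x y)\<close>.\<close>

lemma inf_band_comp_eq_0:
  fixes d x y :: "'a::oc_banach_lattice"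
  assumes d0: "0 \<le> d" and x0: "0 \<le> x" and y0: "0 \<le> y" and "inf d x = 0"
  shows "inf d (band_comp x y) = 0"
proof -
  define w where "w = inf d (band_comp x y)"
  have w0: "0 \<le> w" unfolding w_def using d0 band_comp_nonneg[OF x0 y0] by simp
  have "inf y (real n *\<^sub>R x) \<le> band_comp x y - w" for n
  proof -
    let ?s = "inf y (real n *\<^sub>R x)"
    have "inf ?s w \<le> inf (real n *\<^sub>R x) d" unfolding w_def by (intro inf_mono) auto
    also have "\<dots> = 0" using inf_scaleR_nat_eq_0[OF d0 x0 \<open>inf d x = 0\<close>] by (simp add: inf_commute)
    finally have "inf ?s w \<le> 0" .
    moreover have "0 \<le> inf ?s w" using x0 y0 w0 by (simp add: scaleR_nonneg_nonneg)
    ultimately have "inf ?s w = 0" by (rule order.antisym)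
    then have "?s + w = sup ?s w" using add_eq_inf_sup[of ?s w] by simp
    also have "\<dots> \<le> band_comp x y" using band_comp_ge[OF x0 y0] unfolding w_def by simp
    finally show ?thesis by (simp add: algebra_simps)
  qed
  then have "band_comp x y \<le> band_comp x y - w" by (rule band_comp_least[OF x0 y0])
  then have "w \<le> 0" by simp
  then show ?thesis using w0 unfolding w_def by (rule order.antisym)
qed

lemma band_comp_diff_disjoint:
  fixes x x' z :: "'a::oc_banach_lattice"
  assumes "0 \<le> x'" "x' \<le> x" "0 \<le> z"
  shows "inf (band_comp x z - band_comp x' z) x' = 0"
proof -
  have "band_comp x z \<le> z" using band_comp_le assms by (meson order_trans)
  then have "band_comp x z - band_comp x' z \<le> z - band_comp x' z" by (rule diff_right_mono)
  then have "inf (band_comp x z - band_comp x' z) x' \<le> inf (z - band_comp x' z) x'"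
    by (rule inf_mono) simp
  also have "\<dots> = 0" using band_comp_complement_disjoint assms by blast
  finally show ?thesis
    using band_comp_mono[OF assms] assms(1) by (simp add: order.antisym)
qed

lemma lmod_bproj_diff_le:
  fixes x x' v :: "'a::oc_banach_lattice"
  assumes "0 \<le> x'" "x' \<le> x"
  shows "lmod (bproj x v - bproj x' v)
    \<le> (band_comp x (ppart v) - band_comp x' (ppart v)) + (band_comp x (npart v) - band_comp x' (npart v))"
proof -
  have "0 \<le> x" using assms by simp
  then have "bproj x v - bproj x' v
    = (band_comp x (ppart v) - band_comp x' (ppart v)) - (band_comp x (npart v) - band_comp x' (npart v))"
    unfolding bproj_eq_band_comp lmod_eq_self[OF assms(1)] lmod_eq_self[OF \<open>0 \<le> x\<close>]
    by (simp add: algebra_simps)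
  moreover have "0 \<le> band_comp x z - band_comp x' z" if "0 \<le> z" for z
    using band_comp_mono[OF assms that] by simp
  ultimately show ?thesis using ppart_nonneg npart_nonneg by (metis lmod_diff_le_add)
qed

lemma bproj_diff_disjoint:
  fixes x1 x2 x3 u v :: "'a::oc_banach_lattice"
  assumes "0 \<le> x3" "x3 \<le> x2" "x2 \<le> x1"
  shows "(bproj x1 u - bproj x2 u) \<bottom>\<^sub>L (bproj x2 v - bproj x3 v)"
proof -
  have x2: "0 \<le> x2" using assms by simp
  have gap_pos: "0 \<le> band_comp x1 z - band_comp x2 z" if "0 \<le> z" for z
    using band_comp_mono[OF x2 assms(3) that] by simp
  define D where "D = (band_comp x1 (ppart u) - band_comp x2 (ppart u))
    + (band_comp x1 (npart u) - band_comp x2 (npart u))"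
  define Q where "Q = band_comp x2 (ppart v) + band_comp x2 (npart v)"
  have lmod_u: "lmod (bproj x1 u - bproj x2 u) \<le> D"
    unfolding D_def by (rule lmod_bproj_diff_le[OF x2 assms(3)])
  have "lmod (bproj x2 v - bproj x3 v)
    \<le> (band_comp x2 (ppart v) - band_comp x3 (ppart v))
      + (band_comp x2 (npart v) - band_comp x3 (npart v))"
    by (rule lmod_bproj_diff_le[OF assms(1,2)])
  also have "\<dots> \<le> Q"
    unfolding Q_def by (intro add_mono) (simp_all add: band_comp_nonneg[OF assms(1)] ppart_nonneg npart_nonneg)
  finally have lmod_v: "lmod (bproj x2 v - bproj x3 v) \<le> Q" .
  have "inf D Q = 0"
  proof -
    have "0 \<le> D" unfolding D_def by (intro add_nonneg_nonneg gap_pos ppart_nonneg npart_nonneg)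
    moreover have "inf D x2 = 0" unfolding D_def
      using inf_add_eq_0 gap_pos ppart_nonneg npart_nonneg x2 band_comp_diff_disjoint[OF x2 assms(3)] by metis
    ultimately have "inf (band_comp x2 z) D = 0" if "0 \<le> z" for z
      using inf_band_comp_eq_0[OF _ x2 that] by (simp add: inf_commute)
    then have "inf Q D = 0"
      unfolding Q_def using inf_add_eq_0 band_comp_nonneg[OF x2] ppart_nonneg npart_nonneg \<open>0 \<le> D\<close> by metis
    then show ?thesis by (simp add: inf_commute)
  qed
  with lmod_u lmod_v show ?thesis by (rule disjI_lmod_le)
qed

theorem proposition3p12:
  fixes A :: "'a::oc_banach_lattice set"
    and T \<sigma> \<rho> :: "'a \<Rightarrow> 'a"
    and x1 x2 x3 :: 'a
  defines "B \<equiv> gen_balg (bproj ` A)"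
  assumes "lattice_ideal A"
    and "volterra B T"
    and "x1 \<in> A" and "x2 \<in> A" and "x3 \<in> A"
    and "0 \<le> x3" and "x3 \<le> x2" and "x2 \<le> x1"
    and "antichain B {bproj x1, \<sigma>, \<rho>}"
  shows "(\<forall>x w. w \<in> range (pcompl (bproj x1)) \<longrightarrow>
           (bproj x1 (T (\<sigma> x)) - bproj x2 (T (\<sigma> x)))
             \<bottom>\<^sub>L (bproj x2 (T (pcompl \<rho> (\<sigma> x) + w)) - bproj x3 (T (pcompl \<rho> (\<sigma> x) + w))))
       \<and> (\<forall>x. (bproj x1 (T (\<sigma> x)) - bproj x2 (T (\<sigma> x))) \<bottom>\<^sub>L bproj x2 (T (pcompl \<rho> (\<sigma> x))))"
proof -
  have x2: "0 \<le> x2" using \<open>0 \<le> x3\<close> \<open>x3 \<le> x2\<close> by simp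
  have "(bproj x1 u - bproj x2 u) \<bottom>\<^sub>L (bproj x2 v - bproj x3 v)" for u v
    using bproj_diff_disjoint \<open>0 \<le> x3\<close> \<open>x3 \<le> x2\<close> \<open>x2 \<le> x1\<close> by blast
  moreover have "(bproj x1 u - bproj x2 u) \<bottom>\<^sub>L bproj x2 v" for u v
    using bproj_diff_disjoint[OF order.refl x2 \<open>x2 \<le> x1\<close>] by (simp add: bproj_0)
  ultimately show ?thesis by blast
qed

end
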